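(* Let $C$ be a 2-copula and let $(U,V)$ be a random pair with joint distribution function $C$. Then: (i) $C$ is $I(-1,-1)$ if and only if $C(u,v)\,C(u',v')\ge C(u,v')\,C(u',v)$ for all $u,v,u',v'\in[0,1]$ with $u\le u'$ and $v\le v'$; (ii) $C$ is $I(1,-1)$ if and only if $[v-C(u,v)]\,[v'-C(u',v')]\le [v-C(u',v)]\,[v'-C(u,v')]$ for all $u,v,u',v'\in[0,1]$ with $u\le u'$ and $v\le v'$; (iii) $C$ is $I(-1,1)$ if and only if $[u-C(u,v)]\,[u'-C(u',v')]\le [u'-C(u',v)]\,[u-C(u,v')]$ for all $u,v,u',v'\in[0,1]$ with $u\le u'$ and $v\le v'$; (iv) $C$ is $I(1,1)$ if and only if $\widehat{C}(u,v)\,\widehat{C}(u',v')\ge \widehat{C}(u,v')\,\widehat{C}(u',v)$ for all $u,v,u',v'\in[0,1]$ with $u\le u'$ and $v\le v'$.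
   Context: An $n$-copula is the restriction to $[0,1]^n$ of an $n$-dimensional distribution function whose univariate marginals are uniform on $[0,1]$. For $\alpha=(\alpha_1,\dots,\alpha_n)\in\{-1,1\}^n$ and a random vector $\mathbf X=(X_1,\dots,X_n)$, write $\alpha\mathbf X=(\alpha_1X_1,\dots,\alpha_nX_n)$; inequalities between vectors are componentwise. $\mathbf X$ (or its distribution) is called increasing according to the direction $\alpha$, written $I(\alpha)$, if for every $\mathbf x\in\mathbb R^n$ the map $\mathbf x'\mapsto \mathbb P[\alpha\mathbf X>\mathbf x\mid \alpha\mathbf X>\mathbf x']$ is nondecreasing in $\mathbf x'$, i.e. $\mathbb P[\alpha\mathbf X>\mathbf x\mid \alpha\mathbf X>\mathbf x']\le \mathbb P[\alpha\mathbf X>\mathbf x\mid \alpha\mathbf X>\mathbf x'']$ whenever $\mathbf x'\le\mathbf x''$ and $\mathbb P[\alpha\mathbf X>\mathbf x'']>0$. A copula $C$ is called $I(\alpha)$ if a random vector with distribution function $C$ is $I(\alpha)$. The survival copula of the 2-copula $C$ is $\widehat C(u,v)=\mathbb P[U>1-u,\,V>1-v]=u+v-1+C(1-u,1-v)$. *)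

theory Defs
  imports "HOL-Probability.Probability"
begin

definition has_copula_df :: "(real \<times> real) measure \<Rightarrow> (real \<Rightarrow> real \<Rightarrow> real) \<Rightarrow> bool" where
  "has_copula_df M C \<longleftrightarrow>
     prob_space M \<and> sets M = sets (borel :: (real \<times> real) measure) \<and>
     (\<forall>u\<in>{0..1}. measure M ({..u} \<times> UNIV) = u) \<and>
     (\<forall>v\<in>{0..1}. measure M (UNIV \<times> {..v}) = v) \<and>
     (\<forall>u\<in>{0..1}. \<forall>v\<in>{0..1}. C u v = measure M ({..u} \<times> {..v}))"

definition is_2copula :: "(real \<Rightarrow> real \<Rightarrow> real) \<Rightarrow> bool" where
  "is_2copula C \<longleftrightarrow> (\<exists>M. has_copula_df M C)"

definition upper_event :: "real \<times> real \<Rightarrow> real \<times> real \<Rightarrow> (real \<times> real) set" where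
  "upper_event a x = {z. fst a * fst z > fst x \<and> snd a * snd z > snd x}"

definition cond_prob :: "'a measure \<Rightarrow> 'a set \<Rightarrow> 'a set \<Rightarrow> real" where
  "cond_prob M A B = measure M (A \<inter> B) / measure M B"

definition increasing_dir :: "(real \<times> real) measure \<Rightarrow> real \<times> real \<Rightarrow> bool" where
  "increasing_dir M a \<longleftrightarrow>
     (\<forall>x x' x''. fst x' \<le> fst x'' \<and> snd x' \<le> snd x'' \<and> measure M (upper_event a x'') > 0 \<longrightarrow>
        cond_prob M (upper_event a x) (upper_event a x')
          \<le> cond_prob M (upper_event a x) (upper_event a x''))"

definition survival_copula :: "(real \<Rightarrow> real \<Rightarrow> real) \<Rightarrow> real \<Rightarrow> real \<Rightarrow> real" where
  "survival_copula C u v = u + v - 1 + C (1 - u) (1 - v)"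

end

theory Submission
  imports Defs
begin

text \<open>
  The survival function G(x) = P[\<alpha>X > x] of a direction \<alpha> is antitone, and the
  intersection of the events {\<alpha>X > x} and {\<alpha>X > x'} is {\<alpha>X > max x x'}. Hence
  I(\<alpha>) says that x' \<mapsto> G(max x x') / G(x') is nondecreasing, which for an antitone
  nonnegative G is equivalent to G being TP2 on the plane: TP2 yields the monotonicity one
  coordinate at a time, and conversely TP2 is the instance of the ratio inequality in which
  x shares its first coordinate with x' and its second with x''.
  Uniform marginals have no atoms and charge only (0,1], so G(p,q) is C, v - C(u,v),
  u - C(u,v) or the survival copula evaluated at the clamped, possibly reflected,
  coordinates. TP2 is preserved under monotone reparametrisation of both coordinates in the
  same sense, and turns into the reverse rule RR2 when exactly one coordinate is reversed.
\<close>

definition tp2_on :: "'a::linorder set \<Rightarrow> 'b::linorder set \<Rightarrow> ('a \<Rightarrow> 'b \<Rightarrow> real) \<Rightarrow> bool" where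
  "tp2_on S T K \<longleftrightarrow>
     (\<forall>u\<in>S. \<forall>v\<in>T. \<forall>u'\<in>S. \<forall>v'\<in>T. u \<le> u' \<and> v \<le> v' \<longrightarrow>
        K u v' * K u' v \<le> K u v * K u' v')"

definition rr2_on :: "'a::linorder set \<Rightarrow> 'b::linorder set \<Rightarrow> ('a \<Rightarrow> 'b \<Rightarrow> real) \<Rightarrow> bool" where
  "rr2_on S T K \<longleftrightarrow>
     (\<forall>u\<in>S. \<forall>v\<in>T. \<forall>u'\<in>S. \<forall>v'\<in>T. u \<le> u' \<and> v \<le> v' \<longrightarrow>
        K u v * K u' v' \<le> K u' v * K u v')"

lemma tp2_on_swap: "tp2_on T S (\<lambda>v u. K u v) \<longleftrightarrow> tp2_on S T K"
  unfolding tp2_on_def by (auto simp: mult.commute)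

lemma rr2_on_swap: "rr2_on T S (\<lambda>v u. K u v) \<longleftrightarrow> rr2_on S T K"
  unfolding rr2_on_def by (metis mult.commute)

lemma tp2_on_compose_mono:
  assumes "mono f" "mono g"
  shows "tp2_on A B (\<lambda>p q. K (f p) (g q)) \<longleftrightarrow> tp2_on (f ` A) (g ` B) K"
proof
  assume tp2: "tp2_on A B (\<lambda>p q. K (f p) (g q))"
  show "tp2_on (f ` A) (g ` B) K"
    unfolding tp2_on_def
  proof (intro ballI impI)
    fix u v u' v'
    assume "u \<in> f ` A" "v \<in> g ` B" "u' \<in> f ` A" "v' \<in> g ` B" and "u \<le> u' \<and> v \<le> v'"
    then obtain p p' q q' where pq: "p \<in> A" "p' \<in> A" "q \<in> B" "q' \<in> B"
      and eq: "u = f p" "u' = f p'" "v = g q" "v' = g q'" by blast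
    \<comment> \<open>if u = u' or v = v' the inequality is an identity\<close>
    consider "u = u'" | "v = v'" | "p \<le> p'" "q \<le> q'"
      using \<open>u \<le> u' \<and> v \<le> v'\<close> eq assms by (metis linorder_le_cases monoD order_antisym)
    then show "K u v' * K u' v \<le> K u v * K u' v'"
      by cases (use tp2 pq eq in \<open>auto simp: tp2_on_def mult.commute\<close>)
  qed
qed (use assms in \<open>auto simp: tp2_on_def monoD\<close>)

lemma tp2_on_compose_antimono:
  assumes "antimono f" "antimono g"
  shows "tp2_on A B (\<lambda>p q. K (f p) (g q)) \<longleftrightarrow> tp2_on (f ` A) (g ` B) K"
proof
  assume tp2: "tp2_on A B (\<lambda>p q. K (f p) (g q))"
  show "tp2_on (f ` A) (g ` B) K"
    unfolding tp2_on_def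
  proof (intro ballI impI)
    fix u v u' v'
    assume "u \<in> f ` A" "v \<in> g ` B" "u' \<in> f ` A" "v' \<in> g ` B" and "u \<le> u' \<and> v \<le> v'"
    then obtain p p' q q' where pq: "p \<in> A" "p' \<in> A" "q \<in> B" "q' \<in> B"
      and eq: "u = f p" "u' = f p'" "v = g q" "v' = g q'" by blast
    consider "u = u'" | "v = v'" | "p' \<le> p" "q' \<le> q"
      using \<open>u \<le> u' \<and> v \<le> v'\<close> eq assms by (metis linorder_le_cases antimonoD order_antisym)
    then show "K u v' * K u' v \<le> K u v * K u' v'"
      by cases (use tp2 pq eq in \<open>auto simp: tp2_on_def mult.commute\<close>)
  qed
next
  assume "tp2_on (f ` A) (g ` B) K"
  then show "tp2_on A B (\<lambda>p q. K (f p) (g q))"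
    unfolding tp2_on_def
  proof (intro ballI impI)
    fix p q p' q' assume "p \<in> A" "q \<in> B" "p' \<in> A" "q' \<in> B" and "p \<le> p' \<and> q \<le> q'"
    with \<open>tp2_on (f ` A) (g ` B) K\<close> assms
    have "K (f p') (g q) * K (f p) (g q') \<le> K (f p') (g q') * K (f p) (g q)"
      unfolding tp2_on_def by (blast dest: antimonoD)
    then show "K (f p) (g q') * K (f p') (g q) \<le> K (f p) (g q) * K (f p') (g q')"
      by (simp add: mult.commute)
  qed
qed

lemma tp2_on_compose_mono_antimono:
  assumes "mono f" "antimono g"
  shows "tp2_on A B (\<lambda>p q. K (f p) (g q)) \<longleftrightarrow> rr2_on (f ` A) (g ` B) K"
proof
  assume tp2: "tp2_on A B (\<lambda>p q. K (f p) (g q))"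
  show "rr2_on (f ` A) (g ` B) K"
    unfolding rr2_on_def
  proof (intro ballI impI)
    fix u v u' v'
    assume "u \<in> f ` A" "v \<in> g ` B" "u' \<in> f ` A" "v' \<in> g ` B" and "u \<le> u' \<and> v \<le> v'"
    then obtain p p' q q' where pq: "p \<in> A" "p' \<in> A" "q \<in> B" "q' \<in> B"
      and eq: "u = f p" "u' = f p'" "v = g q" "v' = g q'" by blast
    consider "u = u'" | "v = v'" | "p \<le> p'" "q' \<le> q"
      using \<open>u \<le> u' \<and> v \<le> v'\<close> eq assms by (metis linorder_le_cases monoD antimonoD order_antisym)
    then show "K u v * K u' v' \<le> K u' v * K u v'"
      by cases (use tp2 pq eq in \<open>auto simp: tp2_on_def mult.commute\<close>)
  qed
qed (use assms in \<open>auto simp: tp2_on_def rr2_on_def monoD antimonoD mult.commute\<close>)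

lemma tp2_on_compose_antimono_mono:
  assumes "antimono f" "mono g"
  shows "tp2_on A B (\<lambda>p q. K (f p) (g q)) \<longleftrightarrow> rr2_on (f ` A) (g ` B) K"
proof -
  have "tp2_on A B (\<lambda>p q. K (f p) (g q)) \<longleftrightarrow> tp2_on B A (\<lambda>q p. K (f p) (g q))"
    by (rule tp2_on_swap[symmetric])
  also have "\<dots> \<longleftrightarrow> rr2_on (g ` B) (f ` A) (\<lambda>v u. K u v)"
    by (rule tp2_on_compose_mono_antimono[OF assms(2,1)])
  also have "\<dots> \<longleftrightarrow> rr2_on (f ` A) (g ` B) K"
    by (rule rr2_on_swap)
  finally show ?thesis .
qed

lemma tp2_imp_ratio_mono_fst:
  fixes G :: "'a::linorder \<Rightarrow> 'b::linorder \<Rightarrow> real"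
  assumes antitone: "\<And>p p' q q'. p \<le> p' \<Longrightarrow> q \<le> q' \<Longrightarrow> G p' q' \<le> G p q"
    and nonneg: "\<And>p q. 0 \<le> G p q"
    and tp2: "tp2_on UNIV UNIV G" and "p \<le> p'"
  shows "G (max a p) (max b q) * G p' q \<le> G (max a p') (max b q) * G p q"
proof (cases "p' \<le> a")
  case True
  then show ?thesis
    using \<open>p \<le> p'\<close> antitone[of p p' q q] nonneg by (simp add: max_absorb1 mult_left_mono)
next
  case False
  define r where "r = max a p"
  have "p \<le> r" "r \<le> p'" "max a p' = p'"
    using False \<open>p \<le> p'\<close> by (auto simp: r_def)
  have "G r (max b q) * G p' q \<le> G r q * G p' (max b q)"
    using tp2 \<open>r \<le> p'\<close> unfolding tp2_on_def by simp
  also have "\<dots> \<le> G p q * G p' (max b q)"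
    using antitone[OF \<open>p \<le> r\<close> order_refl] nonneg by (simp add: mult_right_mono)
  finally show ?thesis
    using \<open>max a p' = p'\<close> by (simp add: r_def mult.commute)
qed

lemma tp2_imp_ratio_mono:
  fixes G :: "'a::linorder \<Rightarrow> 'b::linorder \<Rightarrow> real"
  assumes antitone: "\<And>p p' q q'. p \<le> p' \<Longrightarrow> q \<le> q' \<Longrightarrow> G p' q' \<le> G p q"
    and nonneg: "\<And>p q. 0 \<le> G p q"
    and tp2: "tp2_on UNIV UNIV G" and "p \<le> p'" "q \<le> q'" "0 < G p' q'"
  shows "G (max a p) (max b q) / G p q \<le> G (max a p') (max b q') / G p' q'"
proof -
  have pos: "0 < G p' q" "0 < G p q"
    using antitone[OF order_refl[of p'] \<open>q \<le> q'\<close>] antitone[OF \<open>p \<le> p'\<close> order_refl[of q]]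
      \<open>0 < G p' q'\<close>
    by linarith+
  have step_fst: "G (max a p) (max b q) * G p' q \<le> G (max a p') (max b q) * G p q"
    using tp2_imp_ratio_mono_fst[OF antitone nonneg tp2 \<open>p \<le> p'\<close>] .
  have step_snd: "G (max a p') (max b q) * G p' q' \<le> G (max a p') (max b q') * G p' q"
    using tp2_imp_ratio_mono_fst[where G="\<lambda>q p. G p q" and a=b and b=a and q=p',
        OF antitone nonneg _ \<open>q \<le> q'\<close>]
      tp2 tp2_on_swap[of UNIV UNIV G]
    by (simp add: mult.commute)
  have "G (max a p) (max b q) * G p' q' * G p' q \<le> G (max a p') (max b q) * G p' q' * G p q"
    using mult_right_mono[OF step_fst, of "G p' q'"] nonneg by (simp add: mult_ac)
  also have "\<dots> \<le> G (max a p') (max b q') * G p q * G p' q"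
    using mult_right_mono[OF step_snd, of "G p q"] nonneg by (simp add: mult_ac)
  finally have "G (max a p) (max b q) * G p' q' \<le> G (max a p') (max b q') * G p q"
    using pos by simp
  with pos \<open>0 < G p' q'\<close> show ?thesis
    by (simp add: divide_simps mult.commute)
qed

lemma ratio_mono_iff_tp2:
  fixes G :: "'a::linorder \<Rightarrow> 'b::linorder \<Rightarrow> real"
  assumes antitone: "\<And>p p' q q'. p \<le> p' \<Longrightarrow> q \<le> q' \<Longrightarrow> G p' q' \<le> G p q"
    and nonneg: "\<And>p q. 0 \<le> G p q"
  shows "(\<forall>a b p q p' q'. p \<le> p' \<and> q \<le> q' \<and> 0 < G p' q' \<longrightarrow>
      G (max a p) (max b q) / G p q \<le> G (max a p') (max b q') / G p' q')
   \<longleftrightarrow> tp2_on UNIV UNIV G"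
proof
  assume ratio: "\<forall>a b p q p' q'. p \<le> p' \<and> q \<le> q' \<and> 0 < G p' q' \<longrightarrow>
      G (max a p) (max b q) / G p q \<le> G (max a p') (max b q') / G p' q'"
  show "tp2_on UNIV UNIV G"
    unfolding tp2_on_def
  proof (intro ballI impI)
    fix p :: 'a and q :: 'b and p' :: 'a and q' :: 'b
    assume "p \<le> p' \<and> q \<le> q'"
    then have "p \<le> p'" "q \<le> q'" by simp_all
    show "G p q' * G p' q \<le> G p q * G p' q'"
    proof (cases "G p' q = 0")
      case False
      then have pos: "0 < G p' q" "0 < G p q"
        using nonneg[of p' q] antitone[OF \<open>p \<le> p'\<close> order_refl[of q]] by linarith+
      have "G (max p p) (max q' q) / G p q \<le> G (max p p') (max q' q) / G p' q"
        using ratio \<open>p \<le> p'\<close> pos(1) by blast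
      then show ?thesis
        using pos \<open>p \<le> p'\<close> \<open>q \<le> q'\<close> by (simp add: max_absorb1 max_absorb2 divide_simps mult.commute)
    qed (simp add: nonneg)
  qed
next
  assume "tp2_on UNIV UNIV G"
  then show "\<forall>a b p q p' q'. p \<le> p' \<and> q \<le> q' \<and> 0 < G p' q' \<longrightarrow>
      G (max a p) (max b q) / G p q \<le> G (max a p') (max b q') / G p' q'"
    using tp2_imp_ratio_mono[where G=G, OF antitone nonneg] by (intro allI impI) simp
qed

definition uniform_cdf :: "real \<Rightarrow> real" where
  "uniform_cdf s = max 0 (min 1 s)"

lemma uniform_cdf_nonneg [simp]: "0 \<le> uniform_cdf s"
  and uniform_cdf_le_one [simp]: "uniform_cdf s \<le> 1"
  by (simp_all add: uniform_cdf_def)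

lemma uniform_cdf_mono: "mono uniform_cdf"
  by (auto simp: mono_def uniform_cdf_def)

lemma uniform_cdf_id: "s \<in> {0..1} \<Longrightarrow> uniform_cdf s = s"
  by (simp add: uniform_cdf_def)

lemma range_uniform_cdf: "range uniform_cdf = {0..1}"
proof (intro equalityI subsetI)
  fix s :: real assume "s \<in> {0..1}"
  then show "s \<in> range uniform_cdf"
    using uniform_cdf_id[of s] by (metis rangeI)
qed (auto simp: uniform_cdf_def)

lemma antimono_uniform_cdf_neg: "antimono (\<lambda>p. uniform_cdf (- p))"
  by (auto simp: antimono_def uniform_cdf_def)

lemma antimono_one_minus_uniform_cdf: "antimono (\<lambda>p. 1 - uniform_cdf p)"
  by (auto simp: antimono_def uniform_cdf_def)

lemma range_uniform_cdf_neg: "range (\<lambda>p. uniform_cdf (- p)) = {0..1}"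
proof (intro equalityI subsetI)
  fix s :: real assume "s \<in> {0..1}"
  then show "s \<in> range (\<lambda>p. uniform_cdf (- p))"
    using uniform_cdf_id[of s] by (metis minus_minus rangeI)
qed auto

lemma range_one_minus_uniform_cdf: "range (\<lambda>p. 1 - uniform_cdf p) = {0..1}"
proof (intro equalityI subsetI)
  fix s :: real assume "s \<in> {0..1}"
  then have "s = 1 - uniform_cdf (1 - s)"
    by (simp add: uniform_cdf_id)
  then show "s \<in> range (\<lambda>p. 1 - uniform_cdf p)"
    by (metis rangeI)
qed auto

lemma uniform_cdf_increment_le: "0 \<le> e \<Longrightarrow> uniform_cdf s - uniform_cdf (s - e) \<le> e"
  by (simp add: uniform_cdf_def)

lemma le_uniform_cdf_iff: "0 < x \<Longrightarrow> x \<le> 1 \<Longrightarrow> x \<le> uniform_cdf s \<longleftrightarrow> x \<le> s"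
  by (auto simp: uniform_cdf_def)

context prob_space
begin

context
  fixes X :: "'a \<Rightarrow> real"
  assumes X_measurable[measurable]: "X \<in> borel_measurable M"
    and X_uniform: "\<And>u. u \<in> {0..1} \<Longrightarrow> prob {z \<in> space M. X z \<le> u} = u"
begin

lemma prob_le_uniform_cdf: "prob {z \<in> space M. X z \<le> s} = uniform_cdf s"
proof -
  consider "s < 0" | "s \<in> {0..1}" | "1 < s" by force
  then show ?thesis
  proof cases
    case 1
    then have "prob {z \<in> space M. X z \<le> s} \<le> prob {z \<in> space M. X z \<le> 0}"
      by (intro finite_measure_mono) auto
    with 1 X_uniform[of 0] show ?thesis by (simp add: uniform_cdf_def measure_le_0_iff)
  next
    case 3
    then have "prob {z \<in> space M. X z \<le> 1} \<le> prob {z \<in> space M. X z \<le> s}"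
      by (intro finite_measure_mono) auto
    with 3 X_uniform[of 1] show ?thesis
      by (simp add: uniform_cdf_def antisym)
  qed (simp add: X_uniform uniform_cdf_id)
qed

lemma AE_uniform_neq: "AE z in M. X z \<noteq> s"
proof -
  have "prob {z \<in> space M. X z = s} \<le> e" if "0 < e" for e
  proof -
    have "prob {z \<in> space M. X z = s}
        \<le> prob ({z \<in> space M. X z \<le> s} - {z \<in> space M. X z \<le> s - e})"
      using \<open>0 < e\<close> by (intro finite_measure_mono) auto
    also have "\<dots> = uniform_cdf s - uniform_cdf (s - e)"
      using \<open>0 < e\<close> by (subst finite_measure_Diff) (auto simp: prob_le_uniform_cdf)
    also have "\<dots> \<le> e"
      using \<open>0 < e\<close> by (simp add: uniform_cdf_increment_le)
    finally show ?thesis .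
  qed
  then have "prob {z \<in> space M. X z = s} = 0"
    by (intro antisym[OF field_le_epsilon]) simp_all
  moreover have "{z \<in> space M. X z = s} \<in> events"
    by measurable
  ultimately have "AE z in M. z \<notin> {z \<in> space M. X z = s}"
    using prob_eq_0 by blast
  then show ?thesis
    using AE_space by eventually_elim auto
qed

lemma AE_uniform_in_unit_interval: "AE z in M. 0 < X z \<and> X z \<le> 1"
proof -
  have "{z \<in> space M. X z \<le> 0} \<in> events" "{z \<in> space M. X z \<le> 1} \<in> events"
    by measurable
  then have "AE z in M. z \<notin> {z \<in> space M. X z \<le> 0}"
    and "AE z in M. z \<in> {z \<in> space M. X z \<le> 1}"
    using prob_eq_0 prob_eq_1 X_uniform[of 0] X_uniform[of 1] by simp_all
  then show ?thesis
    using AE_space by eventually_elim auto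
qed

end

end

lemma upper_event_Int:
  "upper_event a x \<inter> upper_event a x' = upper_event a (max (fst x) (fst x'), max (snd x) (snd x'))"
  by (auto simp: upper_event_def)

lemma upper_event_antimono:
  "p \<le> p' \<Longrightarrow> q \<le> q' \<Longrightarrow> upper_event a (p', q') \<subseteq> upper_event a (p, q)"
  by (auto simp: upper_event_def)

lemma open_upper_event: "open (upper_event a x)"
  unfolding upper_event_def by (intro open_Collect_conj open_Collect_less continuous_intros)

locale copula_distribution =
  fixes M :: "(real \<times> real) measure" and C :: "real \<Rightarrow> real \<Rightarrow> real"
  assumes copula_df: "has_copula_df M C"
begin

sublocale prob_space M
  using copula_df by (simp add: has_copula_df_def)

lemma sets_M: "sets M = sets borel"
  using copula_df by (simp add: has_copula_df_def)

lemma space_M: "space M = UNIV"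
  using sets_eq_imp_space_eq[OF sets_M] by simp

lemma borel_events: "A \<in> sets borel \<Longrightarrow> A \<in> events"
  by (simp add: sets_M)

lemma Times_events:
  assumes "A \<in> sets borel" "B \<in> sets borel"
  shows "A \<times> B \<in> events"
proof -
  have "A \<times> B \<in> sets (borel \<Otimes>\<^sub>M (borel :: real measure))"
    using assms by (rule pair_measureI)
  then show ?thesis
    unfolding borel_prod sets_M .
qed

lemma interval_Times_events:
  "{..u} \<times> {..v} \<in> events" "{u<..} \<times> {..v} \<in> events"
  "{..u} \<times> {v<..} \<in> events" "{u<..} \<times> {v<..} \<in> events"
  "{..u} \<times> UNIV \<in> events" "{u<..} \<times> UNIV \<in> events" "UNIV \<times> {..v} \<in> events"
  by (auto intro!: Times_events simp: borel_closed borel_open)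

lemma upper_event_events: "upper_event a x \<in> events"
  by (intro borel_events borel_open open_upper_event)

lemma prob_atMost_atMost: "u \<in> {0..1} \<Longrightarrow> v \<in> {0..1} \<Longrightarrow> prob ({..u} \<times> {..v}) = C u v"
  using copula_df by (simp add: has_copula_df_def)

lemma prob_atMost_UNIV: "u \<in> {0..1} \<Longrightarrow> prob ({..u} \<times> UNIV) = u"
  using copula_df by (simp add: has_copula_df_def)

lemma prob_UNIV_atMost: "v \<in> {0..1} \<Longrightarrow> prob (UNIV \<times> {..v}) = v"
  using copula_df by (simp add: has_copula_df_def)

text \<open>Almost surely both coordinates lie in (0,1] and avoid any prescribed value; this is
  what makes strict and weak, clamped and unclamped thresholds interchangeable below.\<close>

lemma AE_coordinates:
  "AE z in M. fst z \<noteq> s \<and> snd z \<noteq> t \<and> 0 < fst z \<and> fst z \<le> 1 \<and> 0 < snd z \<and> snd z \<le> 1"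
proof -
  have fst_uniform: "prob {z \<in> space M. fst z \<le> u} = u" if "u \<in> {0..1}" for u
  proof -
    have "{z \<in> space M. fst z \<le> u} = {..u} \<times> UNIV"
      by (auto simp: space_M)
    with prob_atMost_UNIV that show ?thesis by simp
  qed
  have snd_uniform: "prob {z \<in> space M. snd z \<le> v} = v" if "v \<in> {0..1}" for v
  proof -
    have "{z \<in> space M. snd z \<le> v} = UNIV \<times> {..v}"
      by (auto simp: space_M)
    with prob_UNIV_atMost that show ?thesis by simp
  qed
  have fst: "fst \<in> borel_measurable M" and snd: "snd \<in> borel_measurable M"
    by (simp_all add: measurable_cong_sets[OF sets_M refl] borel_measurable_continuous_onI
        continuous_on_fst continuous_on_snd)
  have "AE z in M. fst z \<noteq> s"
    using fst fst_uniform by (rule AE_uniform_neq)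
  moreover have "AE z in M. 0 < fst z \<and> fst z \<le> 1"
    using fst fst_uniform by (rule AE_uniform_in_unit_interval)
  moreover have "AE z in M. snd z \<noteq> t"
    using snd snd_uniform by (rule AE_uniform_neq)
  moreover have "AE z in M. 0 < snd z \<and> snd z \<le> 1"
    using snd snd_uniform by (rule AE_uniform_in_unit_interval)
  ultimately show ?thesis
    by eventually_elim auto
qed

lemma prob_greaterThan_atMost: "u \<in> {0..1} \<Longrightarrow> v \<in> {0..1} \<Longrightarrow> prob ({u<..} \<times> {..v}) = v - C u v"
proof -
  assume "u \<in> {0..1}" "v \<in> {0..1}"
  have "{u<..} \<times> {..v} = UNIV \<times> {..v} - {..u} \<times> {..v}"
    by auto
  with \<open>u \<in> {0..1}\<close> \<open>v \<in> {0..1}\<close> show ?thesis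
    by simp (subst finite_measure_Diff; auto simp: interval_Times_events prob_atMost_atMost prob_UNIV_atMost)
qed

lemma prob_atMost_greaterThan: "u \<in> {0..1} \<Longrightarrow> v \<in> {0..1} \<Longrightarrow> prob ({..u} \<times> {v<..}) = u - C u v"
proof -
  assume "u \<in> {0..1}" "v \<in> {0..1}"
  have "{..u} \<times> {v<..} = {..u} \<times> UNIV - {..u} \<times> {..v}"
    by auto
  with \<open>u \<in> {0..1}\<close> \<open>v \<in> {0..1}\<close> show ?thesis
    by simp (subst finite_measure_Diff; auto simp: interval_Times_events prob_atMost_atMost prob_atMost_UNIV)
qed

lemma prob_greaterThan_greaterThan:
  "u \<in> {0..1} \<Longrightarrow> v \<in> {0..1} \<Longrightarrow> prob ({u<..} \<times> {v<..}) = survival_copula C (1 - u) (1 - v)"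
proof -
  assume "u \<in> {0..1}" "v \<in> {0..1}"
  have "{u<..} \<times> UNIV = space M - {..u} \<times> UNIV"
    by (auto simp: space_M)
  then have "prob ({u<..} \<times> UNIV) = 1 - u"
    using \<open>u \<in> {0..1}\<close> by (simp add: prob_compl interval_Times_events prob_atMost_UNIV)
  moreover have "{u<..} \<times> {v<..} = {u<..} \<times> UNIV - {u<..} \<times> {..v}"
    by auto
  ultimately show ?thesis
    using \<open>u \<in> {0..1}\<close> \<open>v \<in> {0..1}\<close>
    by (simp add: finite_measure_Diff interval_Times_events prob_greaterThan_atMost survival_copula_def subset_iff)
qed

lemma prob_upper_event_neg_neg:
  "prob (upper_event (-1, -1) (p, q)) = C (uniform_cdf (- p)) (uniform_cdf (- q))"
proof -
  have "AE z in M. z \<in> upper_event (-1, -1) (p, q) \<longleftrightarrow>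
      z \<in> {..uniform_cdf (- p)} \<times> {..uniform_cdf (- q)}"
    using AE_coordinates[of "- p" "- q"]
    by eventually_elim (auto simp: upper_event_def le_uniform_cdf_iff)
  then show ?thesis
    by (subst measure_eq_AE) (auto simp: upper_event_events interval_Times_events prob_atMost_atMost)
qed

lemma prob_upper_event_pos_neg:
  "prob (upper_event (1, -1) (p, q)) = uniform_cdf (- q) - C (uniform_cdf p) (uniform_cdf (- q))"
proof -
  have "AE z in M. z \<in> upper_event (1, -1) (p, q) \<longleftrightarrow>
      z \<in> {uniform_cdf p<..} \<times> {..uniform_cdf (- q)}"
    using AE_coordinates[of p "- q"]
    by eventually_elim (auto simp: upper_event_def le_uniform_cdf_iff not_le[symmetric])
  then show ?thesis
    by (subst measure_eq_AE) (auto simp: upper_event_events interval_Times_events prob_greaterThan_atMost)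
qed

lemma prob_upper_event_neg_pos:
  "prob (upper_event (-1, 1) (p, q)) = uniform_cdf (- p) - C (uniform_cdf (- p)) (uniform_cdf q)"
proof -
  have "AE z in M. z \<in> upper_event (-1, 1) (p, q) \<longleftrightarrow>
      z \<in> {..uniform_cdf (- p)} \<times> {uniform_cdf q<..}"
    using AE_coordinates[of "- p" q]
    by eventually_elim (auto simp: upper_event_def le_uniform_cdf_iff not_le[symmetric])
  then show ?thesis
    by (subst measure_eq_AE) (auto simp: upper_event_events interval_Times_events prob_atMost_greaterThan)
qed

lemma prob_upper_event_pos_pos:
  "prob (upper_event (1, 1) (p, q)) = survival_copula C (1 - uniform_cdf p) (1 - uniform_cdf q)"
proof -
  have "AE z in M. z \<in> upper_event (1, 1) (p, q) \<longleftrightarrow>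
      z \<in> {uniform_cdf p<..} \<times> {uniform_cdf q<..}"
    using AE_coordinates[of p q]
    by eventually_elim (auto simp: upper_event_def le_uniform_cdf_iff not_le[symmetric])
  then show ?thesis
    by (subst measure_eq_AE) (auto simp: upper_event_events interval_Times_events prob_greaterThan_greaterThan)
qed

lemma increasing_dir_iff_tp2:
  "increasing_dir M a \<longleftrightarrow> tp2_on UNIV UNIV (\<lambda>p q. prob (upper_event a (p, q)))"
proof -
  have "increasing_dir M a \<longleftrightarrow>
      (\<forall>x x' x''. fst x' \<le> fst x'' \<and> snd x' \<le> snd x'' \<and> 0 < prob (upper_event a x'') \<longrightarrow>
        prob (upper_event a (max (fst x) (fst x'), max (snd x) (snd x'))) / prob (upper_event a x')
        \<le> prob (upper_event a (max (fst x) (fst x''), max (snd x) (snd x'')))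
          / prob (upper_event a x''))"
    unfolding increasing_dir_def cond_prob_def upper_event_Int ..
  also have "\<dots> \<longleftrightarrow> tp2_on UNIV UNIV (\<lambda>p q. prob (upper_event a (p, q)))"
    unfolding split_paired_All fst_conv snd_conv
    by (rule ratio_mono_iff_tp2)
      (simp_all add: finite_measure_mono upper_event_antimono upper_event_events)
  finally show ?thesis .
qed

lemma increasing_dir_neg_neg_iff: "increasing_dir M (-1, -1) \<longleftrightarrow> tp2_on {0..1} {0..1} C"
proof -
  have "increasing_dir M (-1, -1) \<longleftrightarrow>
      tp2_on UNIV UNIV (\<lambda>p q. C (uniform_cdf (- p)) (uniform_cdf (- q)))"
    by (simp add: increasing_dir_iff_tp2 prob_upper_event_neg_neg)
  also have "\<dots> \<longleftrightarrow> tp2_on (range (\<lambda>p. uniform_cdf (- p))) (range (\<lambda>q. uniform_cdf (- q))) C"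
    using antimono_uniform_cdf_neg antimono_uniform_cdf_neg by (rule tp2_on_compose_antimono)
  finally show ?thesis
    by (simp add: range_uniform_cdf_neg)
qed

lemma increasing_dir_pos_neg_iff:
  "increasing_dir M (1, -1) \<longleftrightarrow> rr2_on {0..1} {0..1} (\<lambda>u v. v - C u v)"
proof -
  have "increasing_dir M (1, -1) \<longleftrightarrow>
      tp2_on UNIV UNIV (\<lambda>p q. uniform_cdf (- q) - C (uniform_cdf p) (uniform_cdf (- q)))"
    by (simp add: increasing_dir_iff_tp2 prob_upper_event_pos_neg)
  also have "\<dots> \<longleftrightarrow> rr2_on (range uniform_cdf) (range (\<lambda>q. uniform_cdf (- q))) (\<lambda>u v. v - C u v)"
    using uniform_cdf_mono antimono_uniform_cdf_neg by (rule tp2_on_compose_mono_antimono)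
  finally show ?thesis
    by (simp add: range_uniform_cdf range_uniform_cdf_neg)
qed

lemma increasing_dir_neg_pos_iff:
  "increasing_dir M (-1, 1) \<longleftrightarrow> rr2_on {0..1} {0..1} (\<lambda>u v. u - C u v)"
proof -
  have "increasing_dir M (-1, 1) \<longleftrightarrow>
      tp2_on UNIV UNIV (\<lambda>p q. uniform_cdf (- p) - C (uniform_cdf (- p)) (uniform_cdf q))"
    by (simp add: increasing_dir_iff_tp2 prob_upper_event_neg_pos)
  also have "\<dots> \<longleftrightarrow> rr2_on (range (\<lambda>p. uniform_cdf (- p))) (range uniform_cdf) (\<lambda>u v. u - C u v)"
    using antimono_uniform_cdf_neg uniform_cdf_mono by (rule tp2_on_compose_antimono_mono)
  finally show ?thesis
    by (simp add: range_uniform_cdf range_uniform_cdf_neg)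
qed

lemma increasing_dir_pos_pos_iff:
  "increasing_dir M (1, 1) \<longleftrightarrow> tp2_on {0..1} {0..1} (survival_copula C)"
proof -
  have "increasing_dir M (1, 1) \<longleftrightarrow>
      tp2_on UNIV UNIV (\<lambda>p q. survival_copula C (1 - uniform_cdf p) (1 - uniform_cdf q))"
    by (simp add: increasing_dir_iff_tp2 prob_upper_event_pos_pos)
  also have "\<dots> \<longleftrightarrow> tp2_on (range (\<lambda>p. 1 - uniform_cdf p)) (range (\<lambda>q. 1 - uniform_cdf q))
      (survival_copula C)"
    using antimono_one_minus_uniform_cdf antimono_one_minus_uniform_cdf
    by (rule tp2_on_compose_antimono)
  finally show ?thesis
    by (simp add: range_one_minus_uniform_cdf)
qed

end

theorem theorem3p1:
  fixes C :: "real \<Rightarrow> real \<Rightarrow> real" and M :: "(real \<times> real) measure"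
  assumes "is_2copula C"
    and "has_copula_df M C"
  shows "(increasing_dir M (-1, -1) \<longleftrightarrow>
           (\<forall>u\<in>{0..1}. \<forall>v\<in>{0..1}. \<forall>u'\<in>{0..1}. \<forall>v'\<in>{0..1}. u \<le> u' \<and> v \<le> v' \<longrightarrow>
              C u v * C u' v' \<ge> C u v' * C u' v))
       \<and> (increasing_dir M (1, -1) \<longleftrightarrow>
           (\<forall>u\<in>{0..1}. \<forall>v\<in>{0..1}. \<forall>u'\<in>{0..1}. \<forall>v'\<in>{0..1}. u \<le> u' \<and> v \<le> v' \<longrightarrow>
              (v - C u v) * (v' - C u' v') \<le> (v - C u' v) * (v' - C u v')))
       \<and> (increasing_dir M (-1, 1) \<longleftrightarrow>
           (\<forall>u\<in>{0..1}. \<forall>v\<in>{0..1}. \<forall>u'\<in>{0..1}. \<forall>v'\<in>{0..1}. u \<le> u' \<and> v \<le> v' \<longrightarrow>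
              (u - C u v) * (u' - C u' v') \<le> (u' - C u' v) * (u - C u v')))
       \<and> (increasing_dir M (1, 1) \<longleftrightarrow>
           (\<forall>u\<in>{0..1}. \<forall>v\<in>{0..1}. \<forall>u'\<in>{0..1}. \<forall>v'\<in>{0..1}. u \<le> u' \<and> v \<le> v' \<longrightarrow>
              survival_copula C u v * survival_copula C u' v'
                \<ge> survival_copula C u v' * survival_copula C u' v))"
proof -
  interpret copula_distribution M C
    using assms(2) by (rule copula_distribution.intro)
  show ?thesis
    unfolding increasing_dir_neg_neg_iff increasing_dir_pos_neg_iff increasing_dir_neg_pos_iff
      increasing_dir_pos_pos_iff tp2_on_def rr2_on_def
    by blast
qed

end
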